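(* Let $A$ be a $k$-algebra. If $V$ is any irreducible $A$-module, then the underlying $A_{\mathbb{C}}$-module $V_{\mathbb{C}}$ (obtained by forgetting the action of $k$) is an irreducible $A_{\mathbb{C}}$-module.
   Context: $k=\mathcal{O}(X)$ is the coordinate algebra of a complex affine variety $X$. A $k$-algebra is a (not necessarily unital or commutative) $\mathbb{C}$-algebra $A$ which is a unital left $k$-module with $\lambda(\omega a)=\omega(\lambda a)=(\lambda\omega)a$ and $\omega(a_1a_2)=(\omega a_1)a_2=a_1(\omega a_2)$. An $A$-module is a complex vector space $V$ with algebra morphisms $A\to\mathrm{Hom}_{\mathbb{C}}(V,V)$ and a unital $k\to\mathrm{Hom}_{\mathbb{C}}(V,V)$ such that $(\omega a)v=\omega(av)=a(\omega v)$; it is irreducible if $AV\neq\{0\}$ and there is no subspace $W$ with $\{0\}\neq W\neq V$ stable under both $A$ and $k$. $A_{\mathbb{C}}$ is $A$ with the $k$-action forgotten; an $A_{\mathbb{C}}$-module $V$ is irreducible if $A_{\mathbb{C}}V\neq\{0\}$ and there is no $A_{\mathbb{C}}$-stable subspace $W$ with $\{0\}\neq W\neq V$. *)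

theory Defs
  imports Complex_Main
begin

(* The commutative ring k (type 'k) is a complex algebra via the unital ring
   homomorphism iota : C -> k; the complex scalar action on k is
   lambda . omega = iota lambda * omega. *)
definition C_algebra_structure :: "(complex \<Rightarrow> 'k::comm_ring_1) \<Rightarrow> bool" where
  "C_algebra_structure \<iota> \<longleftrightarrow>
     (\<forall>x y. \<iota> (x + y) = \<iota> x + \<iota> y) \<and>
     (\<forall>x y. \<iota> (x * y) = \<iota> x * \<iota> y) \<and>
     \<iota> 1 = 1"

inductive_set generated_subalgebra :: "(complex \<Rightarrow> 'k::comm_ring_1) \<Rightarrow> 'k set \<Rightarrow> 'k set"
  for \<iota> G where
  gen: "g \<in> G \<Longrightarrow> g \<in> generated_subalgebra \<iota> G"
| scalar: "\<iota> c \<in> generated_subalgebra \<iota> G"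
| add: "x \<in> generated_subalgebra \<iota> G \<Longrightarrow> y \<in> generated_subalgebra \<iota> G \<Longrightarrow> x + y \<in> generated_subalgebra \<iota> G"
| mult: "x \<in> generated_subalgebra \<iota> G \<Longrightarrow> y \<in> generated_subalgebra \<iota> G \<Longrightarrow> x * y \<in> generated_subalgebra \<iota> G"

(* Coordinate algebra O(X) of a complex affine variety X, i.e. (up to isomorphism)
   a finitely generated reduced commutative complex algebra. *)
definition coordinate_algebra :: "(complex \<Rightarrow> 'k::comm_ring_1) \<Rightarrow> bool" where
  "coordinate_algebra \<iota> \<longleftrightarrow>
     C_algebra_structure \<iota> \<and>
     (\<exists>G. finite G \<and> generated_subalgebra \<iota> G = UNIV) \<and>
     (\<forall>(x::'k) n. x ^ n = 0 \<longrightarrow> x = 0)"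

definition k_algebra ::
  "(complex \<Rightarrow> 'k::comm_ring_1) \<Rightarrow> (complex \<Rightarrow> 'a::ring \<Rightarrow> 'a) \<Rightarrow> ('k \<Rightarrow> 'a \<Rightarrow> 'a) \<Rightarrow> bool" where
  "k_algebra \<iota> sA act \<longleftrightarrow>
     vector_space sA \<and>
     (\<forall>c a b. sA c (a * b) = sA c a * b \<and> sA c (a * b) = a * sA c b) \<and>
     module act \<and>
     (\<forall>c \<omega> a. sA c (act \<omega> a) = act \<omega> (sA c a) \<and> act \<omega> (sA c a) = act (\<iota> c * \<omega>) a) \<and>
     (\<forall>\<omega> a b. act \<omega> (a * b) = act \<omega> a * b \<and> act \<omega> (a * b) = a * act \<omega> b)"

definition AC_module ::
  "(complex \<Rightarrow> 'a::ring \<Rightarrow> 'a) \<Rightarrow> (complex \<Rightarrow> 'v::ab_group_add \<Rightarrow> 'v) \<Rightarrow> ('a \<Rightarrow> 'v \<Rightarrow> 'v) \<Rightarrow> bool" where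
  "AC_module sA sV \<rho> \<longleftrightarrow>
     vector_space sV \<and>
     (\<forall>a. Vector_Spaces.linear sV sV (\<rho> a)) \<and>
     (\<forall>a b v. \<rho> (a + b) v = \<rho> a v + \<rho> b v) \<and>
     (\<forall>c a v. \<rho> (sA c a) v = sV c (\<rho> a v)) \<and>
     (\<forall>a b v. \<rho> (a * b) v = \<rho> a (\<rho> b v))"

definition A_module ::
  "(complex \<Rightarrow> 'k::comm_ring_1) \<Rightarrow> (complex \<Rightarrow> 'a::ring \<Rightarrow> 'a) \<Rightarrow> ('k \<Rightarrow> 'a \<Rightarrow> 'a) \<Rightarrow>
   (complex \<Rightarrow> 'v::ab_group_add \<Rightarrow> 'v) \<Rightarrow> ('a \<Rightarrow> 'v \<Rightarrow> 'v) \<Rightarrow> ('k \<Rightarrow> 'v \<Rightarrow> 'v) \<Rightarrow> bool" where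
  "A_module \<iota> sA act sV \<rho> \<kappa> \<longleftrightarrow>
     AC_module sA sV \<rho> \<and>
     (\<forall>\<omega>. Vector_Spaces.linear sV sV (\<kappa> \<omega>)) \<and>
     (\<forall>\<omega> \<omega>' v. \<kappa> (\<omega> + \<omega>') v = \<kappa> \<omega> v + \<kappa> \<omega>' v) \<and>
     (\<forall>c \<omega> v. \<kappa> (\<iota> c * \<omega>) v = sV c (\<kappa> \<omega> v)) \<and>
     (\<forall>\<omega> \<omega>' v. \<kappa> (\<omega> * \<omega>') v = \<kappa> \<omega> (\<kappa> \<omega>' v)) \<and>
     (\<forall>v. \<kappa> 1 v = v) \<and>
     (\<forall>\<omega> a v. \<rho> (act \<omega> a) v = \<kappa> \<omega> (\<rho> a v) \<and> \<kappa> \<omega> (\<rho> a v) = \<rho> a (\<kappa> \<omega> v))"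

definition irreducible_A_module ::
  "(complex \<Rightarrow> 'k::comm_ring_1) \<Rightarrow> (complex \<Rightarrow> 'a::ring \<Rightarrow> 'a) \<Rightarrow> ('k \<Rightarrow> 'a \<Rightarrow> 'a) \<Rightarrow>
   (complex \<Rightarrow> 'v::ab_group_add \<Rightarrow> 'v) \<Rightarrow> ('a \<Rightarrow> 'v \<Rightarrow> 'v) \<Rightarrow> ('k \<Rightarrow> 'v \<Rightarrow> 'v) \<Rightarrow> bool" where
  "irreducible_A_module \<iota> sA act sV \<rho> \<kappa> \<longleftrightarrow>
     A_module \<iota> sA act sV \<rho> \<kappa> \<and>
     (\<exists>a v. \<rho> a v \<noteq> 0) \<and>
     \<not> (\<exists>W. module.subspace sV W \<and> W \<noteq> {0} \<and> W \<noteq> UNIV \<and>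
            (\<forall>a w. w \<in> W \<longrightarrow> \<rho> a w \<in> W) \<and> (\<forall>\<omega> w. w \<in> W \<longrightarrow> \<kappa> \<omega> w \<in> W))"

definition irreducible_AC_module ::
  "(complex \<Rightarrow> 'a::ring \<Rightarrow> 'a) \<Rightarrow> (complex \<Rightarrow> 'v::ab_group_add \<Rightarrow> 'v) \<Rightarrow> ('a \<Rightarrow> 'v \<Rightarrow> 'v) \<Rightarrow> bool" where
  "irreducible_AC_module sA sV \<rho> \<longleftrightarrow>
     AC_module sA sV \<rho> \<and>
     (\<exists>a v. \<rho> a v \<noteq> 0) \<and>
     \<not> (\<exists>W. module.subspace sV W \<and> W \<noteq> {0} \<and> W \<noteq> UNIV \<and>
            (\<forall>a w. w \<in> W \<longrightarrow> \<rho> a w \<in> W))"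

end

theory Submission
  imports Defs
begin

text \<open>Let \<open>W\<close> be a nonzero proper \<open>A\<close>-stable subspace. If \<open>A W \<noteq> 0\<close>, the span of \<open>A W\<close> is also
  \<open>k\<close>-stable, because \<open>\<omega> (a w) = (\<omega> a) w\<close>; it is nonzero and contained in \<open>W\<close>. Otherwise \<open>W\<close> lies
  in the annihilator of \<open>A\<close>, which is \<open>k\<close>-stable because the actions of \<open>A\<close> and \<open>k\<close> commute, and
  proper because \<open>A V \<noteq> 0\<close>. Either way irreducibility of \<open>V\<close> as an \<open>A\<close>-module is contradicted.\<close>

context vector_space
begin

interpretation endo: vector_space_pair scale scale ..

lemma span_stable:
  assumes "Vector_Spaces.linear scale scale f" and "f ` S \<subseteq> S"
  shows "f ` span S \<subseteq> span S"
  using endo.linear_span_image[OF assms(1)] span_mono[OF assms(2)] by simp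

lemma subspace_common_kernel:
  assumes "\<And>i. Vector_Spaces.linear scale scale (f i)"
  shows "subspace {v. \<forall>i. f i v = 0}"
proof -
  have "{v. \<forall>i. f i v = 0} = (\<Inter>i. {v. f i v = 0})" by blast
  then show ?thesis
    using subspace_Inter endo.linear_subspace_kernel[OF assms] by auto
qed

end

lemma A_moduleD:
  assumes "A_module \<iota> sA act sV \<rho> \<kappa>"
  shows "vector_space sV"
    and "Vector_Spaces.linear sV sV (\<rho> a)"
    and "Vector_Spaces.linear sV sV (\<kappa> \<omega>)"
    and "\<rho> (a * b) v = \<rho> a (\<rho> b v)"
    and "\<rho> (act \<omega> a) v = \<kappa> \<omega> (\<rho> a v)"
    and "\<kappa> \<omega> (\<rho> a v) = \<rho> a (\<kappa> \<omega> v)"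
  using assms unfolding A_module_def AC_module_def by simp_all

lemma A_module_span_action_stable:
  fixes W :: "'v::ab_group_add set"
  assumes M: "A_module \<iota> sA act sV \<rho> \<kappa>"
  defines "U \<equiv> module.span sV {\<rho> a w | a w. w \<in> W}"
  shows "\<rho> a ` U \<subseteq> U" and "\<kappa> \<omega> ` U \<subseteq> U"
proof -
  interpret V: vector_space sV by (rule A_moduleD(1)[OF M])
  have "\<rho> a ` {\<rho> b w | b w. w \<in> W} \<subseteq> {\<rho> b w | b w. w \<in> W}"
    using A_moduleD(4)[OF M, symmetric] by blast
  then show "\<rho> a ` U \<subseteq> U" unfolding U_def by (rule V.span_stable[OF A_moduleD(2)[OF M]])
  have "\<kappa> \<omega> ` {\<rho> b w | b w. w \<in> W} \<subseteq> {\<rho> b w | b w. w \<in> W}"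
    using A_moduleD(5)[OF M, symmetric] by blast
  then show "\<kappa> \<omega> ` U \<subseteq> U" unfolding U_def by (rule V.span_stable[OF A_moduleD(3)[OF M]])
qed

lemma A_module_annihilator_stable:
  assumes M: "A_module \<iota> sA act sV \<rho> \<kappa>"
  defines "N \<equiv> {v. \<forall>a. \<rho> a v = 0}"
  shows "module.subspace sV N" and "\<rho> a ` N \<subseteq> N" and "\<kappa> \<omega> ` N \<subseteq> N"
proof -
  interpret V: vector_space sV by (rule A_moduleD(1)[OF M])
  interpret VV: vector_space_pair sV sV ..
  show "module.subspace sV N"
    unfolding N_def by (rule V.subspace_common_kernel[OF A_moduleD(2)[OF M]])
  have "\<rho> b (\<rho> a v) = 0" if "v \<in> N" for b v
    using that A_moduleD(4)[OF M, of b a v] unfolding N_def by simp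
  then show "\<rho> a ` N \<subseteq> N" unfolding N_def by blast
  have "\<rho> a (\<kappa> \<omega> v) = 0" if "v \<in> N" for a v
  proof -
    have "\<rho> a (\<kappa> \<omega> v) = \<kappa> \<omega> (\<rho> a v)" by (rule A_moduleD(6)[OF M, symmetric])
    also have "\<dots> = 0" using that VV.linear_0[OF A_moduleD(3)[OF M]] unfolding N_def by simp
    finally show ?thesis .
  qed
  then show "\<kappa> \<omega> ` N \<subseteq> N" unfolding N_def by blast
qed

lemma irreducible_A_module_A_stable_trivial:
  assumes irr: "irreducible_A_module \<iota> sA act sV \<rho> \<kappa>"
    and W: "module.subspace sV W" and W_stable: "\<And>a. \<rho> a ` W \<subseteq> W"
  shows "W = {0} \<or> W = UNIV"
proof (rule ccontr)
  assume W_proper: "\<not> (W = {0} \<or> W = UNIV)"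
  from irr have M: "A_module \<iota> sA act sV \<rho> \<kappa>" and nonzero: "\<exists>a v. \<rho> a v \<noteq> 0"
    and no_submodule: "\<And>U. module.subspace sV U \<Longrightarrow> U \<noteq> {0} \<Longrightarrow> U \<noteq> UNIV \<Longrightarrow>
        (\<And>a. \<rho> a ` U \<subseteq> U) \<Longrightarrow> (\<And>\<omega>. \<kappa> \<omega> ` U \<subseteq> U) \<Longrightarrow> False"
    unfolding irreducible_A_module_def by (blast, blast, blast)
  interpret V: vector_space sV by (rule A_moduleD(1)[OF M])
  show False
  proof (cases "\<exists>a w. w \<in> W \<and> \<rho> a w \<noteq> 0")
    case True
    then obtain a w where "w \<in> W" "\<rho> a w \<noteq> 0" by blast
    define U where "U = V.span {\<rho> a w | a w. w \<in> W}"
    have "U \<subseteq> W"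
      unfolding U_def using W W_stable by (intro V.span_minimal) auto
    then have "U \<noteq> UNIV" using W_proper by blast
    moreover have "\<rho> a w \<in> U"
      unfolding U_def using \<open>w \<in> W\<close> by (intro V.span_base) blast
    then have "U \<noteq> {0}" using \<open>\<rho> a w \<noteq> 0\<close> by blast
    moreover have "V.subspace U" unfolding U_def by (rule V.subspace_span)
    ultimately show False
      using no_submodule A_module_span_action_stable[OF M] unfolding U_def by blast
  next
    case False
    define N where "N = {v. \<forall>a. \<rho> a v = 0}"
    have "W \<subseteq> N" using False unfolding N_def by blast
    moreover have "N \<noteq> UNIV" using nonzero unfolding N_def by blast
    ultimately show False
      using no_submodule[of N] A_module_annihilator_stable[OF M] W_proper V.subspace_0[OF W]
      unfolding N_def by blast
  qed
qed

theorem lemma3p3: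
  fixes \<iota> :: "complex \<Rightarrow> 'k::comm_ring_1"
    and sA :: "complex \<Rightarrow> 'a::ring \<Rightarrow> 'a"
    and act :: "'k \<Rightarrow> 'a \<Rightarrow> 'a"
    and sV :: "complex \<Rightarrow> 'v::ab_group_add \<Rightarrow> 'v"
    and \<rho> :: "'a \<Rightarrow> 'v \<Rightarrow> 'v"
    and \<kappa> :: "'k \<Rightarrow> 'v \<Rightarrow> 'v"
  assumes "coordinate_algebra \<iota>"
    and "k_algebra \<iota> sA act"
    and "irreducible_A_module \<iota> sA act sV \<rho> \<kappa>"
  shows "irreducible_AC_module sA sV \<rho>"
proof -
  from assms(3) have "AC_module sA sV \<rho>" and "\<exists>a v. \<rho> a v \<noteq> 0"
    unfolding irreducible_A_module_def A_module_def by blast+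
  moreover have "W = {0} \<or> W = UNIV"
    if "module.subspace sV W" and "\<forall>a w. w \<in> W \<longrightarrow> \<rho> a w \<in> W" for W
    using irreducible_A_module_A_stable_trivial[OF assms(3)] that by blast
  ultimately show ?thesis unfolding irreducible_AC_module_def by blast
qed

end
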